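(* Let $\vec n\in\mathbb{R}^9$ with $\sum_i n(i)=0$ and $\sum_i n(i)^2=1$, and for $r\ge0$ let $\rho_r=\sum_i[4p_r(i)-\frac13]\Pi_i$ with $p_r(i)=\frac19+r\,n(i)$. The set of $r\ge0$ for which $\rho_r$ is a density operator is an interval $[0,r(\vec n)]$, where $r(\vec n)$ is the smallest positive root of $4r^3F(\vec n)-r^2+\frac1{54}=0$. In particular $r(\vec n)=\frac1{3\sqrt6}$ when $F(\vec n)=0$, $r(\vec n)=\frac1{3\sqrt2}$ when $F(\vec n)=\frac1{\sqrt2}$, $r(\vec n)=\frac1{6\sqrt2}$ when $F(\vec n)=-\frac1{\sqrt2}$, and for all such $\vec n$, $$\frac1{6\sqrt2}\le r(\vec n)\le\frac1{3\sqrt2}.$$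
   Context: Let $\omega=e^{2\pi i/3}$, standard basis $|0\rangle,|1\rangle,|2\rangle$ of $\mathbb{C}^3$, $X|j\rangle=|j+1\bmod 3\rangle$, $Z|j\rangle=\omega^j|j\rangle$, $|\psi_0\rangle=\frac1{\sqrt2}(0,1,-1)^T$; for $m,n\in\{0,1,2\}$ and $i=3m+n+1$, $\Pi_i$ is the projector onto $X^mZ^n|\psi_0\rangle$ (the canonical Hesse SIC), so $p_r(i)=\frac13\operatorname{Tr}(\rho_r\Pi_i)$. Identify index $i=3m+n+1$ with $(m,n)\in\mathbb{Z}_3^2$; the 12 affine lines are $\{1,2,3\},\{4,5,6\},\{7,8,9\},\{1,4,7\},\{2,5,8\},\{3,6,9\},\{1,5,9\},\{2,6,7\},\{3,4,8\},\{1,6,8\},\{2,4,9\},\{3,5,7\}$, and $Q$ is the set of ordered triples $(i,j,k)$ of pairwise distinct indices with $\{i,j,k\}$ a line. For $v\in\mathbb{R}^9$ define $F(v)=\sum_i v(i)^3-\frac12\sum_{(i,j,k)\in Q}v(i)v(j)v(k)$. *)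

theory Defs
  imports Complex_Main
begin

text \<open>Dimension 3: vectors in C^3 and 3x3 matrices are represented as functions
  on nat indices, only indices 0,1,2 being relevant.\<close>

definition omega :: complex where
  "omega = cis (2 * pi / 3)"

text \<open>Shift X|j> = |j+1 mod 3>, i.e. (X v)_j = v_{j-1 mod 3}; clock Z|j> = omega^j |j>.\<close>
definition Xop :: "(nat \<Rightarrow> complex) \<Rightarrow> nat \<Rightarrow> complex" where
  "Xop v j = v ((j + 2) mod 3)"

definition Zop :: "(nat \<Rightarrow> complex) \<Rightarrow> nat \<Rightarrow> complex" where
  "Zop v j = omega ^ j * v j"

definition psi0 :: "nat \<Rightarrow> complex" where
  "psi0 j = (if j = 1 then 1 / complex_of_real (sqrt 2)
             else if j = 2 then - 1 / complex_of_real (sqrt 2) else 0)"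

definition sic_vec :: "nat \<Rightarrow> nat \<Rightarrow> nat \<Rightarrow> complex" where
  "sic_vec m n = (Xop ^^ m) ((Zop ^^ n) psi0)"

text \<open>Projector Pi_i onto X^m Z^n psi0, where i = 3m+n+1, i in {1..9}.\<close>
definition Proj :: "nat \<Rightarrow> nat \<Rightarrow> nat \<Rightarrow> complex" where
  "Proj i a b = (let v = sic_vec ((i - 1) div 3) ((i - 1) mod 3) in v a * cnj (v b))"

text \<open>The 12 affine lines of Z_3^2 (indices 1..9) and the ordered triples Q.\<close>
definition lines :: "nat set set" where
  "lines = {{1,2,3},{4,5,6},{7,8,9},{1,4,7},{2,5,8},{3,6,9},{1,5,9},{2,6,7},{3,4,8},
            {1,6,8},{2,4,9},{3,5,7}}"

definition Qtrip :: "(nat \<times> nat \<times> nat) set" where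
  "Qtrip = {(i,j,k). i \<noteq> j \<and> j \<noteq> k \<and> i \<noteq> k \<and> {i,j,k} \<in> lines}"

definition Ffun :: "(nat \<Rightarrow> real) \<Rightarrow> real" where
  "Ffun v = (\<Sum>i\<in>{1..9}. v i ^ 3) - 1/2 * (\<Sum>(i,j,k)\<in>Qtrip. v i * v j * v k)"

definition prob :: "(nat \<Rightarrow> real) \<Rightarrow> real \<Rightarrow> nat \<Rightarrow> real" where
  "prob nv r i = 1/9 + r * nv i"

definition rho :: "(nat \<Rightarrow> real) \<Rightarrow> real \<Rightarrow> nat \<Rightarrow> nat \<Rightarrow> complex" where
  "rho nv r a b = (\<Sum>i\<in>{1..9}. complex_of_real (4 * prob nv r i - 1/3) * Proj i a b)"

definition density_op :: "(nat \<Rightarrow> nat \<Rightarrow> complex) \<Rightarrow> bool" where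
  "density_op A \<longleftrightarrow>
     (\<forall>a<3. \<forall>b<3. A a b = cnj (A b a)) \<and>
     (\<forall>x :: nat \<Rightarrow> complex. 0 \<le> Re (\<Sum>a<3. \<Sum>b<3. cnj (x a) * A a b * x b)) \<and>
     (\<Sum>a<3. A a a) = 1"

end

theory Submission
  imports Defs
begin

text \<open>In the standard basis rho_r = I/3 + r N is an explicit Hermitian 3x3 matrix of trace 1,
  the sum of its principal 2x2 minors is 1/3 - 6 r^2 and its determinant is
  2 (4 r^3 F - r^2 + 1/54), with F = F(n). A Hermitian 3x3 matrix with nonnegative trace, minor sum
  and determinant is positive semidefinite, and conversely. At r = 1/(3 sqrt 2) the minor sum
  vanishes, which forces a nonpositive determinant; evaluated at r = +-1/(3 sqrt 2) this gives
  |F| <= 1/sqrt 2. Then the cubic is strictly decreasing on [0, 1/(3 sqrt 2)], nonnegative at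
  1/(6 sqrt 2) and nonpositive at 1/(3 sqrt 2), so its first positive root r(n) lies in between,
  and rho_r is a state for r <= r(n). For r > r(n) positivity fails: the admissible r form an
  interval containing 0, and just beyond r(n) the minor sum is positive while the determinant is
  negative.\<close>

section \<open>Positive semidefinite Hermitian 3x3 matrices\<close>

text \<open>The Hermitian form x* A x of A = [[d0, u, v], [cnj u, d1, w], [cnj v, cnj w, d2]] in real
  coordinates, where u = u1 + i u2, v = v1 + i v2, w = w1 + i w2 and x = (a0 + i b0, a1 + i b1, a2 + i b2).\<close>
definition hform :: "real \<Rightarrow> real \<Rightarrow> real \<Rightarrow> real \<Rightarrow> real \<Rightarrow> real \<Rightarrow> real \<Rightarrow> real \<Rightarrow> real \<Rightarrow>
    real \<Rightarrow> real \<Rightarrow> real \<Rightarrow> real \<Rightarrow> real \<Rightarrow> real \<Rightarrow> real" where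
  "hform d0 d1 d2 u1 u2 v1 v2 w1 w2 a0 b0 a1 b1 a2 b2 =
     d0*(a0^2+b0^2) + d1*(a1^2+b1^2) + d2*(a2^2+b2^2)
     + 2*(u1*(a0*a1+b0*b1) - u2*(a0*b1 - b0*a1))
     + 2*(v1*(a0*a2+b0*b2) - v2*(a0*b2 - b0*a2))
     + 2*(w1*(a1*a2+b1*b2) - w2*(a1*b2 - b1*a2))"

definition hform2 :: "real \<Rightarrow> real \<Rightarrow> real \<Rightarrow> real \<Rightarrow> real \<Rightarrow> real \<Rightarrow> real \<Rightarrow> real \<Rightarrow> real" where
  "hform2 p s q1 q2 a1 b1 a2 b2 =
     p*(a1^2+b1^2) + s*(a2^2+b2^2) + 2*(q1*(a1*a2+b1*b2) - q2*(a1*b2 - b1*a2))"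

definition minors2_sum :: "real \<Rightarrow> real \<Rightarrow> real \<Rightarrow> real \<Rightarrow> real \<Rightarrow> real \<Rightarrow> real \<Rightarrow> real \<Rightarrow> real \<Rightarrow> real" where
  "minors2_sum d0 d1 d2 u1 u2 v1 v2 w1 w2 =
     (d0*d1 - (u1^2+u2^2)) + (d0*d2 - (v1^2+v2^2)) + (d1*d2 - (w1^2+w2^2))"

definition hdet :: "real \<Rightarrow> real \<Rightarrow> real \<Rightarrow> real \<Rightarrow> real \<Rightarrow> real \<Rightarrow> real \<Rightarrow> real \<Rightarrow> real \<Rightarrow> real" where
  "hdet d0 d1 d2 u1 u2 v1 v2 w1 w2 =
     d0*d1*d2 + 2*((u1*w1 - u2*w2)*v1 + (u1*w2 + u2*w1)*v2)
     - d0*(w1^2+w2^2) - d1*(v1^2+v2^2) - d2*(u1^2+u2^2)"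

definition psd3 :: "real \<Rightarrow> real \<Rightarrow> real \<Rightarrow> real \<Rightarrow> real \<Rightarrow> real \<Rightarrow> real \<Rightarrow> real \<Rightarrow> real \<Rightarrow> bool" where
  "psd3 d0 d1 d2 u1 u2 v1 v2 w1 w2 \<longleftrightarrow>
     (\<forall>a0 b0 a1 b1 a2 b2. 0 \<le> hform d0 d1 d2 u1 u2 v1 v2 w1 w2 a0 b0 a1 b1 a2 b2)"

text \<open>Swapping basis vectors 0 and 1 (resp. 0 and 2) transports statements about the first
  coordinate to the others.\<close>
lemma hform_swap01:
  "hform d1 d0 d2 u1 (-u2) w1 w2 v1 v2 a1 b1 a0 b0 a2 b2 = hform d0 d1 d2 u1 u2 v1 v2 w1 w2 a0 b0 a1 b1 a2 b2"
  unfolding hform_def by algebra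

lemma hform_swap02:
  "hform d2 d1 d0 w1 (-w2) v1 (-v2) u1 (-u2) a2 b2 a1 b1 a0 b0 = hform d0 d1 d2 u1 u2 v1 v2 w1 w2 a0 b0 a1 b1 a2 b2"
  unfolding hform_def by algebra

lemma minors2_sum_swap01:
  "minors2_sum d1 d0 d2 u1 (-u2) w1 w2 v1 v2 = minors2_sum d0 d1 d2 u1 u2 v1 v2 w1 w2"
  unfolding minors2_sum_def by algebra

lemma minors2_sum_swap02:
  "minors2_sum d2 d1 d0 w1 (-w2) v1 (-v2) u1 (-u2) = minors2_sum d0 d1 d2 u1 u2 v1 v2 w1 w2"
  unfolding minors2_sum_def by algebra

lemma hdet_swap01: "hdet d1 d0 d2 u1 (-u2) w1 w2 v1 v2 = hdet d0 d1 d2 u1 u2 v1 v2 w1 w2"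
  unfolding hdet_def by algebra

lemma hdet_swap02: "hdet d2 d1 d0 w1 (-w2) v1 (-v2) u1 (-u2) = hdet d0 d1 d2 u1 u2 v1 v2 w1 w2"
  unfolding hdet_def by algebra

lemma psd3_swap01: "psd3 d1 d0 d2 u1 (-u2) w1 w2 v1 v2 \<longleftrightarrow> psd3 d0 d1 d2 u1 u2 v1 v2 w1 w2"
  unfolding psd3_def by (metis hform_swap01)

lemma psd3_swap02: "psd3 d2 d1 d0 w1 (-w2) v1 (-v2) u1 (-u2) \<longleftrightarrow> psd3 d0 d1 d2 u1 u2 v1 v2 w1 w2"
  unfolding psd3_def by (metis hform_swap02)

lemma hform2_nonneg:
  assumes "0 \<le> p" "0 \<le> s" "q1^2 + q2^2 \<le> p*s"
  shows "0 \<le> hform2 p s q1 q2 a1 b1 a2 b2"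
proof (cases "p = 0")
  case True
  then have "q1 = 0" "q2 = 0" using assms(3) by (simp_all add: sum_power2_le_zero_iff)
  with True assms(2) show ?thesis unfolding hform2_def by simp
next
  case False
  have "p * hform2 p s q1 q2 a1 b1 a2 b2 = (p*a1 + q1*a2 - q2*b2)^2 + (p*b1 + q1*b2 + q2*a2)^2
          + (p*s - (q1^2+q2^2))*(a2^2+b2^2)"
    unfolding hform2_def by algebra
  also have "\<dots> \<ge> 0" using assms by (intro add_nonneg_nonneg mult_nonneg_nonneg) auto
  finally show ?thesis using False assms(1) by (simp add: zero_le_mult_iff)
qed

text \<open>Completing the square in the first coordinate leaves a 2x2 form (the Schur complement,
  scaled by d0) whose determinant is d0 times the full determinant.\<close>
lemma hform_nonneg_pivot:
  assumes "0 < d0" "0 \<le> d0*d1 - (u1^2+u2^2)" "0 \<le> d0*d2 - (v1^2+v2^2)"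
    "0 \<le> hdet d0 d1 d2 u1 u2 v1 v2 w1 w2"
  shows "0 \<le> hform d0 d1 d2 u1 u2 v1 v2 w1 w2 a0 b0 a1 b1 a2 b2"
proof -
  define S1 where "S1 = d0*w1 - (u1*v1 + u2*v2)"
  define S2 where "S2 = d0*w2 - (u1*v2 - u2*v1)"
  have "(d0*d1 - (u1^2+u2^2))*(d0*d2 - (v1^2+v2^2)) - (S1^2+S2^2) = d0 * hdet d0 d1 d2 u1 u2 v1 v2 w1 w2"
    unfolding S1_def S2_def hdet_def by algebra
  moreover have "0 \<le> d0 * hdet d0 d1 d2 u1 u2 v1 v2 w1 w2" using assms by simp
  ultimately have "S1^2 + S2^2 \<le> (d0*d1 - (u1^2+u2^2))*(d0*d2 - (v1^2+v2^2))" by linarith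
  then have "0 \<le> hform2 (d0*d1 - (u1^2+u2^2)) (d0*d2 - (v1^2+v2^2)) S1 S2 a1 b1 a2 b2"
    using assms(2,3) by (rule hform2_nonneg[rotated 2])
  moreover have "d0 * hform d0 d1 d2 u1 u2 v1 v2 w1 w2 a0 b0 a1 b1 a2 b2 =
     (d0*a0 + u1*a1 - u2*b1 + v1*a2 - v2*b2)^2 + (d0*b0 + u1*b1 + u2*a1 + v1*b2 + v2*a2)^2
     + hform2 (d0*d1 - (u1^2+u2^2)) (d0*d2 - (v1^2+v2^2)) S1 S2 a1 b1 a2 b2"
    unfolding hform_def hform2_def S1_def S2_def by algebra
  ultimately have "0 \<le> d0 * hform d0 d1 d2 u1 u2 v1 v2 w1 w2 a0 b0 a1 b1 a2 b2" by simp
  then show ?thesis using assms(1) by (simp add: zero_le_mult_iff)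
qed

lemma diag_mult_hdet_le:
  "d0 * hdet d0 d1 d2 u1 u2 v1 v2 w1 w2 \<le> (d0*d1 - (u1^2+u2^2)) * (d0*d2 - (v1^2+v2^2))"
  "d1 * hdet d0 d1 d2 u1 u2 v1 v2 w1 w2 \<le> (d0*d1 - (u1^2+u2^2)) * (d1*d2 - (w1^2+w2^2))"
  "d2 * hdet d0 d1 d2 u1 u2 v1 v2 w1 w2 \<le> (d0*d2 - (v1^2+v2^2)) * (d1*d2 - (w1^2+w2^2))"
proof -
  have pivot0: "d0 * hdet d0 d1 d2 u1 u2 v1 v2 w1 w2 \<le> (d0*d1 - (u1^2+u2^2)) * (d0*d2 - (v1^2+v2^2))"
    for d0 d1 d2 u1 u2 v1 v2 w1 w2 :: real
  proof -
    have "d0 * hdet d0 d1 d2 u1 u2 v1 v2 w1 w2 = (d0*d1 - (u1^2+u2^2))*(d0*d2 - (v1^2+v2^2))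
       - ((d0*w1 - (u1*v1 + u2*v2))^2 + (d0*w2 - (u1*v2 - u2*v1))^2)"
      unfolding hdet_def by algebra
    then show ?thesis by (simp add: add_nonneg_nonneg)
  qed
  show "d0 * hdet d0 d1 d2 u1 u2 v1 v2 w1 w2 \<le> (d0*d1 - (u1^2+u2^2)) * (d0*d2 - (v1^2+v2^2))"
    by (rule pivot0)
  show "d1 * hdet d0 d1 d2 u1 u2 v1 v2 w1 w2 \<le> (d0*d1 - (u1^2+u2^2)) * (d1*d2 - (w1^2+w2^2))"
    using pivot0[of d1 d0 d2 u1 "-u2" w1 w2 v1 v2] by (simp add: hdet_swap01 mult.commute)
  show "d2 * hdet d0 d1 d2 u1 u2 v1 v2 w1 w2 \<le> (d0*d2 - (v1^2+v2^2)) * (d1*d2 - (w1^2+w2^2))"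
    using pivot0[of d2 d1 d0 w1 "-w2" v1 "-v2" u1 "-u2"] by (simp add: hdet_swap02 mult.commute)
qed

lemma psd3_of_invariants_pos_d0:
  assumes "0 < d0" "0 \<le> d0+d1+d2" "0 \<le> minors2_sum d0 d1 d2 u1 u2 v1 v2 w1 w2"
    "0 \<le> hdet d0 d1 d2 u1 u2 v1 v2 w1 w2"
  shows "psd3 d0 d1 d2 u1 u2 v1 v2 w1 w2"
proof -
  define M01 where "M01 = d0*d1 - (u1^2+u2^2)"
  define M02 where "M02 = d0*d2 - (v1^2+v2^2)"
  define M12 where "M12 = d1*d2 - (w1^2+w2^2)"
  define D where "D = hdet d0 d1 d2 u1 u2 v1 v2 w1 w2"
  have E2: "0 \<le> M01 + M02 + M12" using assms(3) unfolding minors2_sum_def M01_def M02_def M12_def .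
  have D0: "0 \<le> D" using assms(4) unfolding D_def .
  have le: "d0*D \<le> M01*M02" "d1*D \<le> M01*M12" "d2*D \<le> M02*M12"
    unfolding M01_def M02_def M12_def D_def by (fact diag_mult_hdet_le)+
  have "0 \<le> M01 \<and> 0 \<le> M02"
  proof (rule ccontr)
    assume neg: "\<not> (0 \<le> M01 \<and> 0 \<le> M02)"
    have "0 \<le> d0*D" using assms(1) D0 by simp
    then have "0 \<le> M01*M02" using le(1) by linarith
    then have "M01 \<le> 0" "M02 \<le> 0" using neg by (auto simp: zero_le_mult_iff)
    then have "0 < M12" using neg E2 by linarith
    then have d12: "0 < d1*d2" unfolding M12_def by (smt (verit) zero_le_power2)
    show False
    proof (cases "0 < d1")
      case True
      then have "0 < d2" using d12 by (simp add: zero_less_mult_iff)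
      have "0 \<le> d1*D" using True D0 by simp
      then have "0 \<le> M01*M12" using le(2) by linarith
      have "0 \<le> d2*D" using \<open>0 < d2\<close> D0 by simp
      then have "0 \<le> M02*M12" using le(3) by linarith
      with \<open>0 \<le> M01*M12\<close>
      show False using neg \<open>0 < M12\<close> by (simp add: zero_le_mult_iff)
    next
      case False
      then have "d1 < 0" "d2 < 0" using d12 by (auto simp: zero_less_mult_iff)
      then have "d0*(d1+d2) \<le> (-(d1+d2))*(d1+d2)"
        using assms(2) by (intro mult_right_mono_neg) auto
      moreover have "0 < d1*d1 + d2*d2 + d1*d2" using d12 by (smt (verit) zero_le_square)
      moreover have "M01 + M02 + M12 \<le> d0*d1 + d0*d2 + d1*d2"
        unfolding M01_def M02_def M12_def by (smt (verit) zero_le_power2)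
      ultimately show False using E2 by (simp add: algebra_simps)
    qed
  qed
  then show ?thesis
    unfolding psd3_def M01_def M02_def by (intro allI hform_nonneg_pivot) (use assms in auto)
qed

text \<open>Trace, sum of principal 2x2 minors and determinant are, up to sign, the coefficients of the
  characteristic polynomial; if they are nonnegative, no eigenvalue can be negative.\<close>
lemma psd3_of_invariants:
  assumes "0 \<le> d0+d1+d2" "0 \<le> minors2_sum d0 d1 d2 u1 u2 v1 v2 w1 w2"
    "0 \<le> hdet d0 d1 d2 u1 u2 v1 v2 w1 w2"
  shows "psd3 d0 d1 d2 u1 u2 v1 v2 w1 w2"
proof -
  consider "0 < d0" | "0 < d1" | "0 < d2" | "d0 = 0 \<and> d1 = 0 \<and> d2 = 0" using assms(1) by linarith
  then show ?thesis
  proof cases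
    case 1
    then show ?thesis using psd3_of_invariants_pos_d0 assms by blast
  next
    case 2
    then show ?thesis using psd3_of_invariants_pos_d0[of d1 d0 d2 u1 "-u2" w1 w2 v1 v2] assms
      by (simp add: psd3_swap01 minors2_sum_swap01 hdet_swap01 add.commute add.left_commute)
  next
    case 3
    then show ?thesis using psd3_of_invariants_pos_d0[of d2 d1 d0 w1 "-w2" v1 "-v2" u1 "-u2"] assms
      by (simp add: psd3_swap02 minors2_sum_swap02 hdet_swap02 add.commute add.left_commute)
  next
    case 4
    then have "(u1^2+u2^2) + (v1^2+v2^2) + (w1^2+w2^2) \<le> 0"
      using assms(2) unfolding minors2_sum_def by simp
    then have "u1^2+u2^2 \<le> 0" "v1^2+v2^2 \<le> 0" "w1^2+w2^2 \<le> 0"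
      using sum_power2_ge_zero[of u1 u2] sum_power2_ge_zero[of v1 v2] sum_power2_ge_zero[of w1 w2]
      by linarith+
    then have "u1 = 0 \<and> u2 = 0 \<and> v1 = 0 \<and> v2 = 0 \<and> w1 = 0 \<and> w2 = 0"
      by (simp add: sum_power2_le_zero_iff)
    with 4 show ?thesis unfolding psd3_def hform_def by simp
  qed
qed

lemma psd3_minors_nonneg:
  assumes "psd3 d0 d1 d2 u1 u2 v1 v2 w1 w2"
  shows "0 \<le> d0*d1 - (u1^2+u2^2)" "0 \<le> d0*d2 - (v1^2+v2^2)" "0 \<le> d1*d2 - (w1^2+w2^2)"
proof -
  have minor01: "0 \<le> d0*d1 - (u1^2+u2^2)" if "psd3 d0 d1 d2 u1 u2 v1 v2 w1 w2"
    for d0 d1 d2 u1 u2 v1 v2 w1 w2 :: real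
  proof -
    have P: "\<And>a0 b0 a1 b1 a2 b2. 0 \<le> hform d0 d1 d2 u1 u2 v1 v2 w1 w2 a0 b0 a1 b1 a2 b2"
      using that unfolding psd3_def by blast
    have d0: "0 \<le> d0" and d1: "0 \<le> d1"
      using P[of 1 0 0 0 0 0] P[of 0 0 1 0 0 0] by (simp_all add: hform_def)
    have t0: "0 \<le> d0*(d0*d1 - (u1^2+u2^2))"
      using P[of "-u1" "-u2" d0 0 0 0] by (simp add: hform_def power2_eq_square algebra_simps)
    have t1: "0 \<le> d1*(d0*d1 - (u1^2+u2^2))"
      using P[of d1 0 "-u1" u2 0 0] by (simp add: hform_def power2_eq_square algebra_simps)
    have t2: "0 \<le> (d0 - 2)*(u1^2+u2^2) + d1"
      using P[of "-u1" "-u2" 1 0 0 0] by (simp add: hform_def power2_eq_square algebra_simps)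
    consider "0 < d0" | "0 < d1" | "d0 = 0" "d1 = 0" using d0 d1 by linarith
    then show ?thesis
    proof cases
      case 1
      then show ?thesis using t0 by (simp add: zero_le_mult_iff)
    next
      case 2
      then show ?thesis using t1 by (simp add: zero_le_mult_iff)
    next
      case 3
      then show ?thesis using t2 sum_power2_ge_zero[of u1 u2] by simp
    qed
  qed
  show "0 \<le> d0*d1 - (u1^2+u2^2)" using minor01 assms .
  have minor12: "0 \<le> d1*d2 - (w1^2+w2^2)" if "psd3 d0 d1 d2 u1 u2 v1 v2 w1 w2"
    for d0 d1 d2 u1 u2 v1 v2 w1 w2 :: real
    using minor01[of d2 d1 d0 w1 "-w2" v1 "-v2" u1 "-u2"] that by (simp add: psd3_swap02 mult.commute)
  show "0 \<le> d1*d2 - (w1^2+w2^2)" using minor12 assms .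
  show "0 \<le> d0*d2 - (v1^2+v2^2)"
    using minor12[of d1 d0 d2 u1 "-u2" w1 w2 v1 v2] assms by (simp add: psd3_swap01 mult.commute)
qed

text \<open>The test vector is the first column of the adjugate matrix.\<close>
lemma hform_adjugate_column:
  "hform d0 d1 d2 u1 u2 v1 v2 w1 w2 (d1*d2 - (w1^2+w2^2)) 0 (w1*v1 + w2*v2 - d2*u1)
     (w2*v1 - w1*v2 + d2*u2) (u1*w1 - u2*w2 - d1*v1) (d1*v2 - (u1*w2 + u2*w1))
   = hdet d0 d1 d2 u1 u2 v1 v2 w1 w2 * (d1*d2 - (w1^2+w2^2))"
  unfolding hform_def hdet_def by (simp add: power2_eq_square) algebra

lemma psd3_hdet_nonneg:
  assumes "psd3 d0 d1 d2 u1 u2 v1 v2 w1 w2" "0 < minors2_sum d0 d1 d2 u1 u2 v1 v2 w1 w2"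
  shows "0 \<le> hdet d0 d1 d2 u1 u2 v1 v2 w1 w2"
proof -
  have adj12: "0 \<le> hdet d0 d1 d2 u1 u2 v1 v2 w1 w2 * (d1*d2 - (w1^2+w2^2))"
    if "psd3 d0 d1 d2 u1 u2 v1 v2 w1 w2" for d0 d1 d2 u1 u2 v1 v2 w1 w2 :: real
    using that unfolding psd3_def hform_adjugate_column[symmetric] by blast
  have "0 \<le> hdet d0 d1 d2 u1 u2 v1 v2 w1 w2 * (d0*d2 - (v1^2+v2^2))"
    using adj12[of d1 d0 d2 u1 "-u2" w1 w2 v1 v2] assms(1)
    by (simp add: psd3_swap01 hdet_swap01 mult.commute)
  moreover have "0 \<le> hdet d0 d1 d2 u1 u2 v1 v2 w1 w2 * (d0*d1 - (u1^2+u2^2))"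
    using adj12[of d2 d1 d0 w1 "-w2" v1 "-v2" u1 "-u2"] assms(1)
    by (simp add: psd3_swap02 hdet_swap02 mult.commute)
  ultimately have "0 \<le> hdet d0 d1 d2 u1 u2 v1 v2 w1 w2 * minors2_sum d0 d1 d2 u1 u2 v1 v2 w1 w2"
    using adj12[OF assms(1)] unfolding minors2_sum_def by (simp add: distrib_left)
  then show ?thesis using assms(2) by (simp add: zero_le_mult_iff)
qed

lemma hdet_nonpos_if_minors2_sum_eq_0:
  assumes "0 < d0+d1+d2" "minors2_sum d0 d1 d2 u1 u2 v1 v2 w1 w2 = 0"
  shows "hdet d0 d1 d2 u1 u2 v1 v2 w1 w2 \<le> 0"
proof (rule ccontr)
  assume "\<not> ?thesis"
  then have D: "0 < hdet d0 d1 d2 u1 u2 v1 v2 w1 w2" by simp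
  then have psd: "psd3 d0 d1 d2 u1 u2 v1 v2 w1 w2"
    using assms by (intro psd3_of_invariants) auto
  have "d0*d1 - (u1^2+u2^2) = 0" "d0*d2 - (v1^2+v2^2) = 0" "d1*d2 - (w1^2+w2^2) = 0"
    using psd3_minors_nonneg[OF psd] assms(2) unfolding minors2_sum_def by linarith+
  then have "d0 * hdet d0 d1 d2 u1 u2 v1 v2 w1 w2 \<le> 0" "d1 * hdet d0 d1 d2 u1 u2 v1 v2 w1 w2 \<le> 0"
    "d2 * hdet d0 d1 d2 u1 u2 v1 v2 w1 w2 \<le> 0"
    by (metis diag_mult_hdet_le mult_zero_left mult_zero_right)+
  then have "(d0+d1+d2) * hdet d0 d1 d2 u1 u2 v1 v2 w1 w2 \<le> 0" by (simp add: distrib_right)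
  then show False using assms(1) D by (simp add: mult_le_0_iff)
qed

section \<open>The matrix rho_r in the standard basis\<close>

lemma omega_eq: "omega = Complex (-1/2) (sqrt 3 / 2)"
proof -
  have "cos (2*pi/3) = -1/2" "sin (2*pi/3) = sqrt 3/2"
    using cos_pi_minus[of "pi/3"] sin_pi_minus[of "pi/3"] by (simp_all add: cos_60 sin_60)
  then show ?thesis unfolding omega_def complex_eq_iff by simp
qed

lemma Zop_power: "(Zop ^^ n) v j = omega^(n*j) * v j"
  by (induction n) (auto simp: Zop_def power_add mult.commute)

lemma Xop_power: "j < 3 \<Longrightarrow> (Xop ^^ m) v j = v ((j + 2*m) mod 3)"
proof (induction m arbitrary: j)
  case (Suc m)
  have "(Xop ^^ Suc m) v j = (Xop ^^ m) v ((j+2) mod 3)" by (simp add: Xop_def)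
  also have "\<dots> = v (((j+2) mod 3 + 2*m) mod 3)" by (rule Suc.IH) simp
  also have "((j+2) mod 3 + 2*m) mod 3 = (j + 2 * Suc m) mod 3" by (simp add: mod_add_left_eq)
  finally show ?case .
qed simp

lemma sic_vec_eq: "j < 3 \<Longrightarrow> sic_vec m n j = omega^(n * ((j + 2*m) mod 3)) * psi0 ((j + 2*m) mod 3)"
  unfolding sic_vec_def by (simp add: Xop_power Zop_power)

lemma sum_1_9: "(\<Sum>i\<in>{1..9::nat}. f i) = f 1 + f 2 + f 3 + f 4 + f 5 + f 6 + f 7 + f 8 + f 9"
proof -
  have "{1..9::nat} = {1,2,3,4,5,6,7,8,9}" by auto
  then show ?thesis by (simp add: add.assoc)
qed

definition herm3 :: "real \<Rightarrow> real \<Rightarrow> real \<Rightarrow> real \<Rightarrow> real \<Rightarrow> real \<Rightarrow> real \<Rightarrow> real \<Rightarrow> real \<Rightarrow>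
    nat \<Rightarrow> nat \<Rightarrow> complex" where
  "herm3 d0 d1 d2 u1 u2 v1 v2 w1 w2 a b =
     (if a = 0 then (if b = 0 then of_real d0 else if b = 1 then Complex u1 u2 else Complex v1 v2)
      else if a = 1 then (if b = 0 then Complex u1 (-u2) else if b = 1 then of_real d1 else Complex w1 w2)
      else (if b = 0 then Complex v1 (-v2) else if b = 1 then Complex w1 (-w2) else of_real d2))"

lemma sum_lessThan_3: "(\<Sum>a<3::nat. f a) = f 0 + f 1 + f 2"
  by (simp add: numeral_3_eq_3 numeral_2_eq_2)

lemma all_less_3: "(\<forall>a::nat<3. P a) \<longleftrightarrow> P 0 \<and> P 1 \<and> P 2"
  by (auto simp: less_Suc_eq numeral_3_eq_3 numeral_2_eq_2)

lemma density_op_herm3_iff: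
  assumes A: "\<And>a b. a < 3 \<Longrightarrow> b < 3 \<Longrightarrow> A a b = herm3 d0 d1 d2 u1 u2 v1 v2 w1 w2 a b"
  shows "density_op A \<longleftrightarrow> d0+d1+d2 = 1 \<and> psd3 d0 d1 d2 u1 u2 v1 v2 w1 w2"
proof -
  have e: "A 0 0 = of_real d0" "A 0 1 = Complex u1 u2" "A 0 2 = Complex v1 v2"
    "A 1 0 = Complex u1 (-u2)" "A 1 1 = of_real d1" "A 1 2 = Complex w1 w2"
    "A 2 0 = Complex v1 (-v2)" "A 2 1 = Complex w1 (-w2)" "A 2 2 = of_real d2"
    by (simp_all add: A herm3_def)
  have hermitian: "\<forall>a<3. \<forall>b<3. A a b = cnj (A b a)" unfolding all_less_3 e by (simp add: complex_eq_iff)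
  have trace: "(\<Sum>a<3. A a a) = 1 \<longleftrightarrow> d0+d1+d2 = 1"
    unfolding sum_lessThan_3 e by (metis of_real_add of_real_eq_1_iff)
  have form: "Re (\<Sum>a<3. \<Sum>b<3. cnj (x a) * A a b * x b) =
     hform d0 d1 d2 u1 u2 v1 v2 w1 w2 (Re (x 0)) (Im (x 0)) (Re (x 1)) (Im (x 1)) (Re (x 2)) (Im (x 2))"
    for x :: "nat \<Rightarrow> complex"
    unfolding sum_lessThan_3 e hform_def by (simp add: power2_eq_square algebra_simps)
  have "(\<forall>x. 0 \<le> Re (\<Sum>a<3. \<Sum>b<3. cnj (x a) * A a b * x b)) \<longleftrightarrow> psd3 d0 d1 d2 u1 u2 v1 v2 w1 w2"
    unfolding form psd3_def
  proof safe
    fix a0 b0 a1 b1 a2 b2 :: real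
    assume "\<forall>x :: nat \<Rightarrow> complex. 0 \<le> hform d0 d1 d2 u1 u2 v1 v2 w1 w2 (Re (x 0)) (Im (x 0)) (Re (x 1)) (Im (x 1)) (Re (x 2)) (Im (x 2))"
    from spec[OF this, of "\<lambda>j::nat. if j = 0 then Complex a0 b0 else if j = 1 then Complex a1 b1 else Complex a2 b2"]
    show "0 \<le> hform d0 d1 d2 u1 u2 v1 v2 w1 w2 a0 b0 a1 b1 a2 b2" by simp
  qed simp
  then show ?thesis unfolding density_op_def using hermitian trace by blast
qed

text \<open>The entries of N in rho_r = I/3 + r N (see rho_eq_herm3).\<close>
definition cd0 :: "(nat \<Rightarrow> real) \<Rightarrow> real" where "cd0 nv = 2*(nv 4 + nv 5 + nv 6 + nv 7 + nv 8 + nv 9)"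
definition cd1 :: "(nat \<Rightarrow> real) \<Rightarrow> real" where "cd1 nv = 2*(nv 1 + nv 2 + nv 3 + nv 7 + nv 8 + nv 9)"
definition cd2 :: "(nat \<Rightarrow> real) \<Rightarrow> real" where "cd2 nv = 2*(nv 1 + nv 2 + nv 3 + nv 4 + nv 5 + nv 6)"
definition cu1 :: "(nat \<Rightarrow> real) \<Rightarrow> real" where "cu1 nv = nv 8 + nv 9 - 2*nv 7"
definition cu2 :: "(nat \<Rightarrow> real) \<Rightarrow> real" where "cu2 nv = sqrt 3 * (nv 8 - nv 9)"
definition cv1 :: "(nat \<Rightarrow> real) \<Rightarrow> real" where "cv1 nv = nv 5 + nv 6 - 2*nv 4"
definition cv2 :: "(nat \<Rightarrow> real) \<Rightarrow> real" where "cv2 nv = sqrt 3 * (nv 6 - nv 5)"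
definition cw1 :: "(nat \<Rightarrow> real) \<Rightarrow> real" where "cw1 nv = nv 2 + nv 3 - 2*nv 1"
definition cw2 :: "(nat \<Rightarrow> real) \<Rightarrow> real" where "cw2 nv = sqrt 3 * (nv 2 - nv 3)"

lemmas rho_coeff_defs = cd0_def cd1_def cd2_def cu1_def cu2_def cv1_def cv2_def cw1_def cw2_def

definition rho_apply :: "(real \<Rightarrow> real \<Rightarrow> real \<Rightarrow> real \<Rightarrow> real \<Rightarrow> real \<Rightarrow> real \<Rightarrow> real \<Rightarrow> real \<Rightarrow> 'a) \<Rightarrow>
    (nat \<Rightarrow> real) \<Rightarrow> real \<Rightarrow> 'a" where
  "rho_apply f nv r = f (1/3 + r * cd0 nv) (1/3 + r * cd1 nv) (1/3 + r * cd2 nv)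
     (r * cu1 nv) (r * cu2 nv) (r * cv1 nv) (r * cv2 nv) (r * cw1 nv) (r * cw2 nv)"

lemma rho_eq_herm3:
  assumes "a < 3" "b < 3"
  shows "rho nv r a b = rho_apply herm3 nv r a b"
proof -
  have "a = 0 \<or> a = 1 \<or> a = 2" "b = 0 \<or> b = 1 \<or> b = 2" using assms by auto
  then show ?thesis
    unfolding rho_def sum_1_9 Proj_def Let_def rho_apply_def herm3_def rho_coeff_defs
    by (elim disjE; simp add: sic_vec_eq psi0_def;
        simp add: complex_eq_iff omega_eq prob_def power2_eq_square eval_nat_numeral;
        simp add: field_simps)
qed

lemma rho_trace:
  assumes "(\<Sum>i\<in>{1..9}. nv i) = 0"
  shows "(1/3 + r * cd0 nv) + (1/3 + r * cd1 nv) + (1/3 + r * cd2 nv) = 1"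
proof -
  have "(1/3 + r * cd0 nv) + (1/3 + r * cd1 nv) + (1/3 + r * cd2 nv) = 1 + 4*r*(\<Sum>i\<in>{1..9}. nv i)"
    unfolding sum_1_9 cd0_def cd1_def cd2_def by (simp add: algebra_simps)
  then show ?thesis using assms by simp
qed

lemma density_op_rho_iff:
  "(\<Sum>i\<in>{1..9}. nv i) = 0 \<Longrightarrow> density_op (rho nv r) \<longleftrightarrow> rho_apply psd3 nv r"
  using density_op_herm3_iff[of "rho nv r", OF rho_eq_herm3[unfolded rho_apply_def]] rho_trace
  unfolding rho_apply_def by simp

lemma sqrt3_mult_power2: "(r * (sqrt 3 * x))^2 = 3 * r^2 * x^2"
  by (simp add: power_mult_distrib)

lemma rho_minors2_sum:
  assumes "(\<Sum>i\<in>{1..9}. nv i) = 0" "(\<Sum>i\<in>{1..9}. (nv i)^2) = 1"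
  shows "rho_apply minors2_sum nv r = 1/3 - 6*r^2"
proof -
  have n9: "nv 9 = -(nv 1 + nv 2 + nv 3 + nv 4 + nv 5 + nv 6 + nv 7 + nv 8)"
    using assms(1) unfolding sum_1_9 by linarith
  have "rho_apply minors2_sum nv r = 1/3 - 6*r^2*(\<Sum>i\<in>{1..9}. (nv i)^2)"
    unfolding sum_1_9 rho_apply_def minors2_sum_def rho_coeff_defs sqrt3_mult_power2 n9
    by algebra
  then show ?thesis using assms(2) by simp
qed

lemma ordered_triples_of_3set:
  assumes "a \<noteq> b" "b \<noteq> c" "a \<noteq> c"
  shows "{(i,j,k). i \<noteq> j \<and> j \<noteq> k \<and> i \<noteq> k \<and> {i,j,k} = {a,b,c}} =
     {(a,b,c),(a,c,b),(b,a,c),(b,c,a),(c,a,b),(c,b,a)}"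
proof (intro equalityI subsetI)
  fix t assume "t \<in> {(i,j,k). i \<noteq> j \<and> j \<noteq> k \<and> i \<noteq> k \<and> {i,j,k} = {a,b,c}}"
  then obtain i j k where t: "t = (i,j,k)" "i \<noteq> j" "j \<noteq> k" "i \<noteq> k" and s: "{i,j,k} = {a,b,c}"
    by auto
  have "i \<in> {a,b,c}" "j \<in> {a,b,c}" "k \<in> {a,b,c}" using s by blast+
  then show "t \<in> {(a,b,c),(a,c,b),(b,a,c),(b,c,a),(c,a,b),(c,b,a)}" using t by auto
qed (use assms in \<open>auto simp: insert_commute\<close>)

lemma Qtrip_eq: "Qtrip = {(1,2,3),(1,3,2),(2,1,3),(2,3,1),(3,1,2),(3,2,1),
 (4,5,6),(4,6,5),(5,4,6),(5,6,4),(6,4,5),(6,5,4),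
 (7,8,9),(7,9,8),(8,7,9),(8,9,7),(9,7,8),(9,8,7),
 (1,4,7),(1,7,4),(4,1,7),(4,7,1),(7,1,4),(7,4,1),
 (2,5,8),(2,8,5),(5,2,8),(5,8,2),(8,2,5),(8,5,2),
 (3,6,9),(3,9,6),(6,3,9),(6,9,3),(9,3,6),(9,6,3),
 (1,5,9),(1,9,5),(5,1,9),(5,9,1),(9,1,5),(9,5,1),
 (2,6,7),(2,7,6),(6,2,7),(6,7,2),(7,2,6),(7,6,2),
 (3,4,8),(3,8,4),(4,3,8),(4,8,3),(8,3,4),(8,4,3),
 (1,6,8),(1,8,6),(6,1,8),(6,8,1),(8,1,6),(8,6,1),
 (2,4,9),(2,9,4),(4,2,9),(4,9,2),(9,2,4),(9,4,2),
 (3,5,7),(3,7,5),(5,3,7),(5,7,3),(7,3,5),(7,5,3)}"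
proof -
  have "Qtrip = (\<Union>L\<in>lines. {(i,j,k). i \<noteq> j \<and> j \<noteq> k \<and> i \<noteq> k \<and> {i,j,k} = L})"
    unfolding Qtrip_def by auto
  then show ?thesis unfolding lines_def by (simp add: ordered_triples_of_3set insert_commute)
qed

lemma Ffun_expand: "Ffun nv =
   (nv 1^3 + nv 2^3 + nv 3^3 + nv 4^3 + nv 5^3 + nv 6^3 + nv 7^3 + nv 8^3 + nv 9^3)
   - 3*(nv 1*nv 2*nv 3 + nv 4*nv 5*nv 6 + nv 7*nv 8*nv 9 + nv 1*nv 4*nv 7 + nv 2*nv 5*nv 8
        + nv 3*nv 6*nv 9 + nv 1*nv 5*nv 9 + nv 2*nv 6*nv 7 + nv 3*nv 4*nv 8 + nv 1*nv 6*nv 8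
        + nv 2*nv 4*nv 9 + nv 3*nv 5*nv 7)"
  unfolding Ffun_def Qtrip_eq sum_1_9 by (simp add: algebra_simps)

lemma sqrt3_mult_mult: "(r * (sqrt 3 * x)) * (r * (sqrt 3 * y)) = 3 * r^2 * x * y"
proof -
  have "(r * (sqrt 3 * x)) * (r * (sqrt 3 * y)) = (sqrt 3 * sqrt 3) * r^2 * x * y"
    by (simp add: power2_eq_square mult_ac)
  then show ?thesis by simp
qed

lemma rho_hdet:
  assumes "(\<Sum>i\<in>{1..9}. nv i) = 0" "(\<Sum>i\<in>{1..9}. (nv i)^2) = 1"
  shows "rho_apply hdet nv r = 2 * (4*r^3*Ffun nv - r^2 + 1/54)"
proof -
  have n9: "nv 9 = -(nv 1 + nv 2 + nv 3 + nv 4 + nv 5 + nv 6 + nv 7 + nv 8)"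
    using assms(1) unfolding sum_1_9 by linarith
  have hdet_grouped: "hdet d0 d1 d2 u1 u2 v1 v2 w1 w2 = d0*d1*d2
      + 2*(u1*w1*v1 - (u2*w2)*v1 + u1*(w2*v2) + w1*(u2*v2))
      - d0*(w1^2+w2^2) - d1*(v1^2+v2^2) - d2*(u1^2+u2^2)" for d0 d1 d2 u1 u2 v1 v2 w1 w2 :: real
    unfolding hdet_def by algebra
  have "rho_apply hdet nv r = 1/27 - 2*r^2*(\<Sum>i\<in>{1..9}. (nv i)^2) + 8*r^3*Ffun nv"
    unfolding rho_apply_def hdet_grouped rho_coeff_defs sqrt3_mult_power2 sqrt3_mult_mult
    unfolding Ffun_expand sum_1_9 n9 by algebra
  then show ?thesis using assms(2) by simp
qed

lemma rho_apply_hform_rescale: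
  "r * rho_apply hform nv r' a0 b0 a1 b1 a2 b2
     = (r - r') * ((a0^2+b0^2+a1^2+b1^2+a2^2+b2^2)/3) + r' * rho_apply hform nv r a0 b0 a1 b1 a2 b2"
  unfolding rho_apply_def hform_def by (simp add: field_simps)

lemma rho_apply_psd3_iff:
  "rho_apply psd3 nv r \<longleftrightarrow> (\<forall>a0 b0 a1 b1 a2 b2. 0 \<le> rho_apply hform nv r a0 b0 a1 b1 a2 b2)"
  unfolding rho_apply_def psd3_def ..

text \<open>rho is affine in r with value I/3 at r = 0, so for 0 <= r' <= r the matrix rho_r' is a
  convex combination of I/3 and rho_r.\<close>
lemma psd3_rho_downward_closed:
  assumes "rho_apply psd3 nv r" "0 \<le> r'" "r' \<le> r"
  shows "rho_apply psd3 nv r'"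
  unfolding rho_apply_psd3_iff
proof (intro allI)
  fix a0 b0 a1 b1 a2 b2
  show "0 \<le> rho_apply hform nv r' a0 b0 a1 b1 a2 b2"
  proof (cases "r' = 0")
    case True
    then show ?thesis unfolding rho_apply_def hform_def by simp
  next
    case False
    then have "0 < r" using assms(2,3) by linarith
    have "0 \<le> rho_apply hform nv r a0 b0 a1 b1 a2 b2"
      using assms(1) unfolding rho_apply_psd3_iff by blast
    then have "0 \<le> (r - r') * ((a0^2+b0^2+a1^2+b1^2+a2^2+b2^2)/3) + r' * rho_apply hform nv r a0 b0 a1 b1 a2 b2"
      using assms(2,3) by (intro add_nonneg_nonneg mult_nonneg_nonneg) auto
    then have "0 \<le> r * rho_apply hform nv r' a0 b0 a1 b1 a2 b2"
      using rho_apply_hform_rescale[of r nv r' a0 b0 a1 b1 a2 b2] by linarith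
    then show ?thesis using \<open>0 < r\<close> by (simp add: zero_le_mult_iff)
  qed
qed

section \<open>The boundary cubic\<close>

definition boundary_cubic :: "real \<Rightarrow> real \<Rightarrow> real" where
  "boundary_cubic F r = 4*r^3*F - r^2 + 1/54"

lemma boundary_cubic_special_values:
  "boundary_cubic F (1/(3*sqrt 2)) = 4*(1/(3*sqrt 2))^3 * (F - 1/sqrt 2)"
  "boundary_cubic F (-1/(3*sqrt 2)) = -4*(1/(3*sqrt 2))^3 * (F + 1/sqrt 2)"
  "boundary_cubic F (1/(6*sqrt 2)) = (1/(3*sqrt 2))^3/2 * (F + 1/sqrt 2)"
  unfolding boundary_cubic_def by (simp_all add: field_simps power3_eq_cube)

lemma boundary_cubic_strict_antimono:
  assumes F: "F \<le> 1/sqrt 2" and ab: "0 \<le> a" "a < b" "b \<le> 1/(3*sqrt 2)"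
  shows "boundary_cubic F b < boundary_cubic F a"
proof -
  define s :: real where "s = 1/(3*sqrt 2)"
  have s: "0 < s" "(1/sqrt 2) * s = 1/6" unfolding s_def by (simp_all add: field_simps)
  have k: "a*a + a*b + b*b < 3/2*(a+b)*s"
  proof -
    have "a*a \<le> a*s" "b*b \<le> b*s" "a*b \<le> a*s" "a*b < b*s"
      using ab unfolding s_def[symmetric] by (auto intro: mult_left_mono mult_strict_left_mono)
    then show ?thesis by (simp add: algebra_simps)
  qed
  have "4*F*(a*a+a*b+b*b) < a+b"
  proof (cases "F \<le> 0")
    case True
    then have "4*F*(a*a+a*b+b*b) \<le> 0" using ab by (simp add: mult_nonpos_nonneg)
    then show ?thesis using ab by linarith
  next
    case False
    have "4*F*(a*a+a*b+b*b) \<le> 4*(1/sqrt 2)*(a*a+a*b+b*b)" using F ab by (intro mult_right_mono) auto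
    also have "\<dots> < 4*(1/sqrt 2)*(3/2*(a+b)*s)" using k by (intro mult_strict_left_mono) auto
    also have "\<dots> = 6*((1/sqrt 2)*s)*(a+b)" by (simp add: field_simps)
    also have "\<dots> = a+b" unfolding s(2) by simp
    finally show ?thesis .
  qed
  moreover have "boundary_cubic F b - boundary_cubic F a = (b-a)*(4*F*(a*a+a*b+b*b) - (a+b))"
    unfolding boundary_cubic_def by (simp add: algebra_simps power2_eq_square power3_eq_cube)
  ultimately show ?thesis using ab by (smt (verit) mult_pos_neg)
qed

lemma boundary_cubic_root_unique:
  assumes "F \<le> 1/sqrt 2" "0 \<le> x" "x \<le> 1/(3*sqrt 2)" "0 \<le> y" "y \<le> 1/(3*sqrt 2)"
    "boundary_cubic F x = 0" "boundary_cubic F y = 0"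
  shows "x = y"
  using boundary_cubic_strict_antimono[of F x y] boundary_cubic_strict_antimono[of F y x] assms
  by (cases x y rule: linorder_cases) auto

lemma boundary_cubic_root_exists:
  assumes "\<bar>F\<bar> \<le> 1/sqrt 2"
  obtains r0 where "1/(6*sqrt 2) \<le> r0" "r0 \<le> 1/(3*sqrt 2)" "boundary_cubic F r0 = 0"
proof -
  have "boundary_cubic F (1/(3*sqrt 2)) \<le> 0" "0 \<le> boundary_cubic F (1/(6*sqrt 2))"
    using assms unfolding boundary_cubic_special_values by (auto simp: mult_nonpos_nonneg)
  moreover have "\<forall>r. 1/(6*sqrt 2) \<le> r \<and> r \<le> 1/(3*sqrt 2) \<longrightarrow> isCont (boundary_cubic F) r"
    unfolding boundary_cubic_def by (intro allI impI continuous_intros)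
  moreover have "1/(6*sqrt 2) \<le> 1/(3*sqrt 2)" by (simp add: field_simps)
  ultimately show ?thesis
    using IVT2[of "boundary_cubic F" "1/(3*sqrt 2)" 0 "1/(6*sqrt 2)"] that by blast
qed

lemma rho_hdet_eq_boundary_cubic:
  assumes "(\<Sum>i\<in>{1..9}. nv i) = 0" "(\<Sum>i\<in>{1..9}. (nv i)^2) = 1"
  shows "rho_apply hdet nv r = 2 * boundary_cubic (Ffun nv) r"
  using rho_hdet[OF assms] unfolding boundary_cubic_def .

text \<open>At r = 1/(3 sqrt 2) and r = -1/(3 sqrt 2) the principal 2x2 minors of rho sum to zero,
  which forces its determinant to be nonpositive.\<close>
lemma Ffun_abs_le:
  assumes "(\<Sum>i\<in>{1..9}. nv i) = 0" "(\<Sum>i\<in>{1..9}. (nv i)^2) = 1"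
  shows "\<bar>Ffun nv\<bar> \<le> 1/sqrt 2"
proof -
  have "boundary_cubic (Ffun nv) r \<le> 0" if "r^2 = 1/18" for r
  proof -
    have "rho_apply minors2_sum nv r = 0" using rho_minors2_sum[OF assms] that by simp
    then have "rho_apply hdet nv r \<le> 0"
      using rho_trace[OF assms(1)] unfolding rho_apply_def
      by (intro hdet_nonpos_if_minors2_sum_eq_0) auto
    then show ?thesis using rho_hdet_eq_boundary_cubic[OF assms] by simp
  qed
  from this[of "1/(3*sqrt 2)"] this[of "-1/(3*sqrt 2)"]
  show ?thesis unfolding boundary_cubic_special_values
    by (simp add: power_divide mult_le_0_iff field_simps)
qed

lemma density_rho_interval:
  assumes sums: "(\<Sum>i\<in>{1..9}. nv i) = 0" "(\<Sum>i\<in>{1..9}. (nv i)^2) = 1"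
    and r0: "0 \<le> r0" "r0 \<le> 1/(3*sqrt 2)" "boundary_cubic (Ffun nv) r0 = 0"
  shows "{r. 0 \<le> r \<and> density_op (rho nv r)} = {0..r0}"
proof -
  have F: "Ffun nv \<le> 1/sqrt 2" using Ffun_abs_le[OF sums] by linarith
  have minors: "rho_apply minors2_sum nv r = 6 * ((1/(3*sqrt 2))^2 - r^2)" for r
    using rho_minors2_sum[OF sums] by (simp add: power_divide)
  have trace: "0 \<le> (1/3 + r * cd0 nv) + (1/3 + r * cd1 nv) + (1/3 + r * cd2 nv)" for r
    using rho_trace[OF sums(1)] by simp
  have "rho_apply psd3 nv r \<longleftrightarrow> r \<le> r0" if "0 \<le> r" for r
  proof
    assume "r \<le> r0"
    then have "0 \<le> rho_apply minors2_sum nv r"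
      unfolding minors using that r0 by (simp add: power_mono)
    moreover have "0 \<le> rho_apply hdet nv r"
      using boundary_cubic_strict_antimono[OF F that, of r0] \<open>r \<le> r0\<close> r0
      unfolding rho_hdet_eq_boundary_cubic[OF sums] by (cases "r = r0") auto
    ultimately show "rho_apply psd3 nv r"
      using trace unfolding rho_apply_def by (intro psd3_of_invariants)
  next
    assume psd: "rho_apply psd3 nv r"
    show "r \<le> r0"
    proof (rule ccontr)
      assume "\<not> r \<le> r0"
      define r' where "r' = (r0 + r)/2"
      have r': "r0 < r'" "r' < r" using \<open>\<not> r \<le> r0\<close> unfolding r'_def by auto
      have "r \<le> 1/(3*sqrt 2)"
      proof (rule ccontr)
        assume "\<not> ?thesis"
        then have "rho_apply minors2_sum nv r < 0" unfolding minors using that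
          by (simp add: power_strict_mono)
        then show False using psd3_minors_nonneg[of "1/3 + r * cd0 nv"] psd
          unfolding rho_apply_def minors2_sum_def by fastforce
      qed
      then have "0 < rho_apply minors2_sum nv r'" unfolding minors using r' r0
        by (simp add: power_strict_mono)
      moreover have "rho_apply psd3 nv r'" using psd3_rho_downward_closed[OF psd] r' r0 by simp
      ultimately have "0 \<le> rho_apply hdet nv r'" unfolding rho_apply_def by (intro psd3_hdet_nonneg)
      moreover have "boundary_cubic (Ffun nv) r' < 0"
        using boundary_cubic_strict_antimono[OF F r0(1) r'(1)] r' \<open>r \<le> 1/(3*sqrt 2)\<close> r0 by simp
      ultimately show False unfolding rho_hdet_eq_boundary_cubic[OF sums] by simp
    qed
  qed
  then show ?thesis using density_op_rho_iff[OF sums(1)] by auto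
qed

theorem mainTheorem9:
  fixes nv :: "nat \<Rightarrow> real"
  assumes "(\<Sum>i\<in>{1..9}. nv i) = 0"
      and "(\<Sum>i\<in>{1..9}. (nv i)^2) = 1"
  shows "\<exists>r0 > 0.
           4 * r0^3 * Ffun nv - r0^2 + 1/54 = 0 \<and>
           (\<forall>r. 0 < r \<and> r < r0 \<longrightarrow> 4 * r^3 * Ffun nv - r^2 + 1/54 \<noteq> 0) \<and>
           {r. 0 \<le> r \<and> density_op (rho nv r)} = {0..r0} \<and>
           (Ffun nv = 0 \<longrightarrow> r0 = 1 / (3 * sqrt 6)) \<and>
           (Ffun nv = 1 / sqrt 2 \<longrightarrow> r0 = 1 / (3 * sqrt 2)) \<and>
           (Ffun nv = - 1 / sqrt 2 \<longrightarrow> r0 = 1 / (6 * sqrt 2)) \<and>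
           1 / (6 * sqrt 2) \<le> r0 \<and> r0 \<le> 1 / (3 * sqrt 2)"
proof -
  let ?F = "Ffun nv"
  have F: "\<bar>?F\<bar> \<le> 1/sqrt 2" using Ffun_abs_le[OF assms] .
  obtain r0 where r0: "1/(6*sqrt 2) \<le> r0" "r0 \<le> 1/(3*sqrt 2)" "boundary_cubic ?F r0 = 0"
    using boundary_cubic_root_exists[OF F] .
  have "0 < r0" using r0(1) by (smt (verit) divide_pos_pos real_sqrt_gt_zero)
  have root_eq: "r = r0" if "0 \<le> r" "r \<le> 1/(3*sqrt 2)" "boundary_cubic ?F r = 0" for r
    using boundary_cubic_root_unique[of ?F r r0] F that r0 \<open>0 < r0\<close> by simp
  have no_smaller_root: "boundary_cubic ?F r \<noteq> 0" if "0 < r" "r < r0" for r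
    using root_eq[of r] that r0(2) by force
  have "1/(3*sqrt 6) \<le> 1/(3*sqrt 2)" by (intro divide_left_mono mult_left_mono) auto
  moreover have "boundary_cubic 0 (1/(3*sqrt 6)) = 0" by (simp add: boundary_cubic_def power_divide)
  ultimately have "?F = 0 \<Longrightarrow> r0 = 1/(3*sqrt 6)" using root_eq[of "1/(3*sqrt 6)"] by simp
  moreover have "?F = 1/sqrt 2 \<Longrightarrow> r0 = 1/(3*sqrt 2)"
    using root_eq[of "1/(3*sqrt 2)"] by (simp add: boundary_cubic_special_values(1))
  moreover have "?F = -1/sqrt 2 \<Longrightarrow> r0 = 1/(6*sqrt 2)"
    using root_eq[of "1/(6*sqrt 2)"] r0(1,2) by (simp add: boundary_cubic_special_values(3))
  ultimately show ?thesis
    using r0 \<open>0 < r0\<close> no_smaller_root density_rho_interval[OF assms, of r0]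
    unfolding boundary_cubic_def by (intro exI[of _ r0]) auto
qed

end
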